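(* Let $(\mathbf{P},d_{\mathbf{P}})$ be a finite metric poset. For all $\mathbf{P}$-modules $M,N$, \[ d^{\mathrm{Int}\overline{\mathbf{P}}}_{\mathrm{GT}}\bigl(K(M),K(N)\bigr)\ \le\ d^{\mathbf{P}}_{\mathrm{GT}}(M,N). \]
   Context: Fix a field $k$; $\mathrm{vect}$ is the category of finite-dimensional $k$-vector spaces. Finite posets are categories with a unique morphism $x\to y$ iff $x\le y$; for a finite poset $\mathbf{S}$, an $\mathbf{S}$-module is a functor $\mathbf{S}\to\mathrm{vect}$; $g^*$ is precomposition with a monotone map $g$. $\overline{\mathbf{P}}=\mathbf{P}\sqcup\{\top\}$ with $x<\top$ for all $x\in\mathbf{P}$; its extended metric $d_{\overline{\mathbf{P}}}$ extends $d_{\mathbf{P}}$ by $d(x,\top)=d(\top,x)=\infty$ ($x\neq\top$), $d(\top,\top)=0$. For a finite poset $\mathbf{S}$ with (extended) metric, $\mathrm{Int}\,\mathbf{S}=\{(x,y)\in\mathbf{S}\times\mathbf{S}\mid x\le y\}$ with the product order and metric $d_{\mathrm{Int}\mathbf{S}}((x_1,y_1),(x_2,y_2))=\max\{d_{\mathbf{S}}(x_1,x_2),d_{\mathbf{S}}(y_1,y_2)\}$. For $M\in\mathrm{vect}^{\mathbf{P}}$, $\overline{M}$ extends $M$ to $\overline{\mathbf{P}}$ by $\overline{M}(\top)=0$, and $K(M)\in\mathrm{vect}^{\mathrm{Int}\overline{\mathbf{P}}}$ is given by $K(M)((x,y))=\ker\overline{M}(x\le y)$ with structure map for $(x_1,y_1)\le(x_2,y_2)$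 the restriction of $\overline{M}(x_1\le x_2)$. For a finite poset $\mathbf{S}$ with (possibly extended) metric $d_{\mathbf{S}}$ and $\mathbf{S}$-modules $A,B$: a Galois insertion $f:\mathbf{Q}\rightleftarrows\mathbf{S}:g$ is a pair of monotone maps with $f(u)\le x\iff u\le g(x)$ and $f\circ g=\mathrm{id}_{\mathbf{S}}$; a Galois coupling of $(A,B)$ is $(\mathbf{Q},f\dashv g,h\dashv i,\Gamma)$ with $\mathbf{Q}$ a finite poset, $f:\mathbf{Q}\rightleftarrows\mathbf{S}:g$ and $h:\mathbf{Q}\rightleftarrows\mathbf{S}:i$ Galois insertions, $\Gamma\in\mathrm{vect}^{\mathbf{Q}}$ with $g^*\Gamma\cong A$, $i^*\Gamma\cong B$; its cost is $\sup_{q\in\mathbf{Q}}d_{\mathbf{S}}(f(q),h(q))$; $d^{\mathbf{S}}_{\mathrm{GT}}(A,B)$ is the infimum of costs of couplings ($\infty$ if none). *)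

theory Defs
  imports Complex_Main "HOL-Library.Function_Algebras" "HOL-Library.Extended_Nonnegative_Real"
begin

text \<open>All vector spaces are realised as subspaces of the ambient k-vector space
  of functions nat => k.  Every finite-dimensional k-vector space is isomorphic
  to such a subspace, so modules over a poset (functors into vect) are, up to
  isomorphism, exactly the data below.\<close>

type_synonym 'k vec = "nat \<Rightarrow> 'k"

definition vscale :: "'k::field \<Rightarrow> 'k vec \<Rightarrow> 'k vec" where
  "vscale c v = (\<lambda>n. c * v n)"

definition is_subspace :: "('k::field) vec set \<Rightarrow> bool" where
  "is_subspace V \<longleftrightarrow> 0 \<in> V \<and> (\<forall>u\<in>V. \<forall>v\<in>V. u + v \<in> V) \<and> (\<forall>c. \<forall>v\<in>V. vscale c v \<in> V)"

definition fin_dim :: "('k::field) vec set \<Rightarrow> bool" where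
  "fin_dim V \<longleftrightarrow> (\<exists>B. finite B \<and> B \<subseteq> V \<and> V \<subseteq> module.span vscale B)"

definition is_linear_on :: "('k::field) vec set \<Rightarrow> 'k vec set \<Rightarrow> ('k vec \<Rightarrow> 'k vec) \<Rightarrow> bool" where
  "is_linear_on V W \<phi> \<longleftrightarrow> (\<forall>v\<in>V. \<phi> v \<in> W) \<and> (\<forall>u\<in>V. \<forall>v\<in>V. \<phi> (u + v) = \<phi> u + \<phi> v)
     \<and> (\<forall>c. \<forall>v\<in>V. \<phi> (vscale c v) = vscale c (\<phi> v))"

definition is_poset :: "'a set \<Rightarrow> ('a \<Rightarrow> 'a \<Rightarrow> bool) \<Rightarrow> bool" where
  "is_poset X le \<longleftrightarrow> (\<forall>x\<in>X. le x x) \<and> (\<forall>x\<in>X. \<forall>y\<in>X. le x y \<and> le y x \<longrightarrow> x = y)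
     \<and> (\<forall>x\<in>X. \<forall>y\<in>X. \<forall>z\<in>X. le x y \<and> le y z \<longrightarrow> le x z)"

definition is_monotone :: "'a set \<Rightarrow> ('a \<Rightarrow> 'a \<Rightarrow> bool) \<Rightarrow> 'b set \<Rightarrow> ('b \<Rightarrow> 'b \<Rightarrow> bool) \<Rightarrow> ('a \<Rightarrow> 'b) \<Rightarrow> bool" where
  "is_monotone X leX Y leY f \<longleftrightarrow> (\<forall>x\<in>X. f x \<in> Y) \<and> (\<forall>x\<in>X. \<forall>y\<in>X. leX x y \<longrightarrow> leY (f x) (f y))"

definition galois_insertion ::
  "'q set \<Rightarrow> ('q \<Rightarrow> 'q \<Rightarrow> bool) \<Rightarrow> 's set \<Rightarrow> ('s \<Rightarrow> 's \<Rightarrow> bool) \<Rightarrow> ('q \<Rightarrow> 's) \<Rightarrow> ('s \<Rightarrow> 'q) \<Rightarrow> bool" where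
  "galois_insertion Q leQ S leS f g \<longleftrightarrow>
     is_monotone Q leQ S leS f \<and> is_monotone S leS Q leQ g
     \<and> (\<forall>u\<in>Q. \<forall>x\<in>S. leS (f u) x \<longleftrightarrow> leQ u (g x))
     \<and> (\<forall>x\<in>S. f (g x) = x)"

definition is_module :: "'a set \<Rightarrow> ('a \<Rightarrow> 'a \<Rightarrow> bool) \<Rightarrow> ('a \<Rightarrow> ('k::field) vec set)
    \<Rightarrow> ('a \<Rightarrow> 'a \<Rightarrow> 'k vec \<Rightarrow> 'k vec) \<Rightarrow> bool" where
  "is_module S le V F \<longleftrightarrow>
     (\<forall>x\<in>S. is_subspace (V x) \<and> fin_dim (V x))
     \<and> (\<forall>x\<in>S. \<forall>y\<in>S. le x y \<longrightarrow> is_linear_on (V x) (V y) (F x y))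
     \<and> (\<forall>x\<in>S. \<forall>v\<in>V x. F x x v = v)
     \<and> (\<forall>x\<in>S. \<forall>y\<in>S. \<forall>z\<in>S. le x y \<and> le y z \<longrightarrow> (\<forall>v\<in>V x. F y z (F x y v) = F x z v))"

definition module_iso :: "'a set \<Rightarrow> ('a \<Rightarrow> 'a \<Rightarrow> bool)
    \<Rightarrow> ('a \<Rightarrow> ('k::field) vec set) \<Rightarrow> ('a \<Rightarrow> 'a \<Rightarrow> 'k vec \<Rightarrow> 'k vec)
    \<Rightarrow> ('a \<Rightarrow> 'k vec set) \<Rightarrow> ('a \<Rightarrow> 'a \<Rightarrow> 'k vec \<Rightarrow> 'k vec) \<Rightarrow> bool" where
  "module_iso S le VA FA VB FB \<longleftrightarrow>
     (\<exists>\<phi>. (\<forall>x\<in>S. is_linear_on (VA x) (VB x) (\<phi> x) \<and> bij_betw (\<phi> x) (VA x) (VB x))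
        \<and> (\<forall>x\<in>S. \<forall>y\<in>S. le x y \<longrightarrow> (\<forall>v\<in>VA x. \<phi> y (FA x y v) = FB x y (\<phi> x v))))"

text \<open>Couplings use posets Q carried by finite subsets of nat (every finite poset
  is isomorphic to one of these).  The pullback g^* Gamma has spaces VG (g x) and maps
  FG (g x) (g y).\<close>
definition is_coupling :: "'b set \<Rightarrow> ('b \<Rightarrow> 'b \<Rightarrow> bool)
    \<Rightarrow> ('b \<Rightarrow> ('k::field) vec set) \<Rightarrow> ('b \<Rightarrow> 'b \<Rightarrow> 'k vec \<Rightarrow> 'k vec)
    \<Rightarrow> ('b \<Rightarrow> 'k vec set) \<Rightarrow> ('b \<Rightarrow> 'b \<Rightarrow> 'k vec \<Rightarrow> 'k vec)
    \<Rightarrow> nat set \<Rightarrow> (nat \<Rightarrow> nat \<Rightarrow> bool) \<Rightarrow> (nat \<Rightarrow> 'b) \<Rightarrow> ('b \<Rightarrow> nat) \<Rightarrow> (nat \<Rightarrow> 'b) \<Rightarrow> ('b \<Rightarrow> nat)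
    \<Rightarrow> (nat \<Rightarrow> 'k vec set) \<Rightarrow> (nat \<Rightarrow> nat \<Rightarrow> 'k vec \<Rightarrow> 'k vec) \<Rightarrow> bool" where
  "is_coupling S le VA FA VB FB Q leQ f g h i VG FG \<longleftrightarrow>
     finite Q \<and> is_poset Q leQ
     \<and> galois_insertion Q leQ S le f g \<and> galois_insertion Q leQ S le h i
     \<and> is_module Q leQ VG FG
     \<and> module_iso S le (\<lambda>x. VG (g x)) (\<lambda>x y. FG (g x) (g y)) VA FA
     \<and> module_iso S le (\<lambda>x. VG (i x)) (\<lambda>x y. FG (i x) (i y)) VB FB"

text \<open>d_GT: infimum of costs sup_q d (f q) (h q); Inf of the empty set is infinity.\<close>
definition d_GT :: "'b set \<Rightarrow> ('b \<Rightarrow> 'b \<Rightarrow> bool) \<Rightarrow> ('b \<Rightarrow> 'b \<Rightarrow> ennreal)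
    \<Rightarrow> ('b \<Rightarrow> ('k::field) vec set) \<Rightarrow> ('b \<Rightarrow> 'b \<Rightarrow> 'k vec \<Rightarrow> 'k vec)
    \<Rightarrow> ('b \<Rightarrow> 'k vec set) \<Rightarrow> ('b \<Rightarrow> 'b \<Rightarrow> 'k vec \<Rightarrow> 'k vec) \<Rightarrow> ennreal" where
  "d_GT S le d VA FA VB FB =
     Inf {(SUP q\<in>Q. d (f q) (h q)) | Q leQ f g h i VG FG.
            is_coupling S le VA FA VB FB Q leQ f g h i VG FG}"

definition is_metric :: "'a set \<Rightarrow> ('a \<Rightarrow> 'a \<Rightarrow> real) \<Rightarrow> bool" where
  "is_metric X d \<longleftrightarrow> (\<forall>x\<in>X. \<forall>y\<in>X. 0 \<le> d x y \<and> (d x y = 0 \<longleftrightarrow> x = y) \<and> d x y = d y x)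
     \<and> (\<forall>x\<in>X. \<forall>y\<in>X. \<forall>z\<in>X. d x z \<le> d x y + d y z)"

text \<open>P-bar = P with a new top element, represented as None.\<close>
definition Pbar :: "'a set \<Rightarrow> 'a option set" where
  "Pbar P = Some ` P \<union> {None}"

fun le_bar :: "('a \<Rightarrow> 'a \<Rightarrow> bool) \<Rightarrow> 'a option \<Rightarrow> 'a option \<Rightarrow> bool" where
  "le_bar le (Some x) (Some y) = le x y"
| "le_bar le _ None = True"
| "le_bar le None (Some y) = False"

fun d_bar :: "('a \<Rightarrow> 'a \<Rightarrow> real) \<Rightarrow> 'a option \<Rightarrow> 'a option \<Rightarrow> ennreal" where
  "d_bar d (Some x) (Some y) = ennreal (d x y)"
| "d_bar d None None = 0"
| "d_bar d _ _ = \<infinity>"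

definition Int_carrier :: "'a set \<Rightarrow> ('a \<Rightarrow> 'a \<Rightarrow> bool) \<Rightarrow> ('a \<times> 'a) set" where
  "Int_carrier S le = {(x, y). x \<in> S \<and> y \<in> S \<and> le x y}"

definition Int_le :: "('a \<Rightarrow> 'a \<Rightarrow> bool) \<Rightarrow> 'a \<times> 'a \<Rightarrow> 'a \<times> 'a \<Rightarrow> bool" where
  "Int_le le p q \<longleftrightarrow> le (fst p) (fst q) \<and> le (snd p) (snd q)"

definition Int_dist :: "('a \<Rightarrow> 'a \<Rightarrow> ennreal) \<Rightarrow> 'a \<times> 'a \<Rightarrow> 'a \<times> 'a \<Rightarrow> ennreal" where
  "Int_dist d p q = max (d (fst p) (fst q)) (d (snd p) (snd q))"

fun V_bar :: "('a \<Rightarrow> ('k::field) vec set) \<Rightarrow> 'a option \<Rightarrow> 'k vec set" where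
  "V_bar V (Some x) = V x"
| "V_bar V None = {0}"

fun F_bar :: "('a \<Rightarrow> 'a \<Rightarrow> ('k::field) vec \<Rightarrow> 'k vec) \<Rightarrow> 'a option \<Rightarrow> 'a option \<Rightarrow> 'k vec \<Rightarrow> 'k vec" where
  "F_bar F (Some x) (Some y) = F x y"
| "F_bar F _ _ = (\<lambda>v. 0)"

definition K_V :: "('a \<Rightarrow> ('k::field) vec set) \<Rightarrow> ('a \<Rightarrow> 'a \<Rightarrow> 'k vec \<Rightarrow> 'k vec)
    \<Rightarrow> 'a option \<times> 'a option \<Rightarrow> 'k vec set" where
  "K_V V F p = {v \<in> V_bar V (fst p). F_bar F (fst p) (snd p) v = 0}"

definition K_F :: "('a \<Rightarrow> 'a \<Rightarrow> ('k::field) vec \<Rightarrow> 'k vec)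
    \<Rightarrow> 'a option \<times> 'a option \<Rightarrow> 'a option \<times> 'a option \<Rightarrow> 'k vec \<Rightarrow> 'k vec" where
  "K_F F p q = F_bar F (fst p) (fst q)"

end

theory Submission
  imports Defs "HOL-Library.Countable"
begin

(*
  A coupling (Q, f -| g, h -| i, Gamma) of M and N induces one of K(M) and K(N):
  take Int Q-bar with the Galois insertions Int f-bar -| Int g-bar and Int h-bar -| Int i-bar
  and the module K(Gamma).  Adjoining a top and passing to intervals preserve Galois
  insertions, K commutes with pulling back along Int g-bar, and K carries isomorphisms to
  isomorphisms (an isomorphism of modules restricts to the kernels of the structure maps),
  so K(Gamma) pulls back to K(M) and K(N).  Since f-bar and h-bar both fix the top, where
  the extended metric vanishes, the new coupling costs no more than the old one; taking
  infima gives the inequality.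
*)

lemma vector_space_vscale: "vector_space (vscale :: 'k::field \<Rightarrow> 'k vec \<Rightarrow> 'k vec)"
  by unfold_locales (auto simp: vscale_def fun_eq_iff algebra_simps)

lemma fin_dim_subspace:
  fixes W V :: "('k::field) vec set"
  assumes "is_subspace W" "W \<subseteq> V" "fin_dim V"
  shows "fin_dim W"
proof -
  interpret vector_space "vscale :: 'k \<Rightarrow> 'k vec \<Rightarrow> 'k vec" by (rule vector_space_vscale)
  obtain B where B: "finite B" "B \<subseteq> V" "V \<subseteq> span B" using assms(3) fin_dim_def by blast
  obtain C where C: "C \<subseteq> W" "independent C" "W \<subseteq> span C" by (meson basis_exists)
  have "finite C" using independent_span_bound[OF B(1) C(2)] C(1) assms(2) B(3) by blast
  with C show ?thesis unfolding fin_dim_def by blast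
qed

lemma is_subspace_zero: "is_subspace {0::('k::field) vec}"
  by (auto simp: is_subspace_def vscale_def fun_eq_iff)

lemma fin_dim_zero: "fin_dim {0::('k::field) vec}"
proof -
  interpret vector_space "vscale :: 'k \<Rightarrow> 'k vec \<Rightarrow> 'k vec" by (rule vector_space_vscale)
  show ?thesis unfolding fin_dim_def by (intro exI[of _ "{}"]) simp
qed

lemma is_linear_on_zero: "is_linear_on V W \<phi> \<Longrightarrow> 0 \<in> V \<Longrightarrow> \<phi> 0 = 0"
  unfolding is_linear_on_def by (metis add.right_neutral add_left_imp_eq)

lemma is_module_pullback:
  assumes "is_module Q leQ V F" "is_monotone S le Q leQ g"
  shows "is_module S le (\<lambda>x. V (g x)) (\<lambda>x y. F (g x) (g y))"
proof -
  have "\<forall>x\<in>S. g x \<in> Q" "\<forall>x\<in>S. \<forall>y\<in>S. le x y \<longrightarrow> leQ (g x) (g y)"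
    using assms(2) unfolding is_monotone_def by blast+
  with assms(1) show ?thesis unfolding is_module_def by blast
qed

lemma Pbar_cases: "x \<in> Pbar S \<Longrightarrow> (x = None \<Longrightarrow> R) \<Longrightarrow> (\<And>a. a \<in> S \<Longrightarrow> x = Some a \<Longrightarrow> R) \<Longrightarrow> R"
  by (auto simp: Pbar_def)

lemma is_poset_Pbar:
  assumes "is_poset Q le"
  shows "is_poset (Pbar Q) (le_bar le)"
proof -
  have refl: "\<forall>x\<in>Q. le x x" and antisym: "\<forall>x\<in>Q. \<forall>y\<in>Q. le x y \<and> le y x \<longrightarrow> x = y"
    and trans: "\<forall>x\<in>Q. \<forall>y\<in>Q. \<forall>z\<in>Q. le x y \<and> le y z \<longrightarrow> le x z"
    using assms unfolding is_poset_def by blast+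
  have "le_bar le x x" if "x \<in> Pbar Q" for x
    using that by (elim Pbar_cases) (use refl in simp_all)
  moreover have "x = y" if "x \<in> Pbar Q" "y \<in> Pbar Q" "le_bar le x y" "le_bar le y x" for x y
    using that by (elim Pbar_cases) (use antisym in simp_all)
  moreover have "le_bar le x z"
    if "x \<in> Pbar Q" "y \<in> Pbar Q" "z \<in> Pbar Q" "le_bar le x y" "le_bar le y z" for x y z
    using that by (elim Pbar_cases) (simp_all, use trans in blast)
  ultimately show ?thesis unfolding is_poset_def by blast
qed

lemma galois_insertion_Pbar:
  assumes "galois_insertion Q leQ S le f g"
  shows "galois_insertion (Pbar Q) (le_bar leQ) (Pbar S) (le_bar le) (map_option f) (map_option g)"
proof -
  note gi = assms[unfolded galois_insertion_def is_monotone_def]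
  show ?thesis unfolding galois_insertion_def is_monotone_def
  proof (intro conjI ballI impI)
    fix x assume "x \<in> Pbar Q"
    then show "map_option f x \<in> Pbar S"
      by (elim Pbar_cases) (use gi in \<open>auto simp: Pbar_def\<close>)
  next
    fix x y assume "x \<in> Pbar Q" "y \<in> Pbar Q" "le_bar leQ x y"
    then show "le_bar le (map_option f x) (map_option f y)"
      by (elim Pbar_cases) (use gi in auto)
  next
    fix x assume "x \<in> Pbar S"
    then show "map_option g x \<in> Pbar Q"
      by (elim Pbar_cases) (use gi in \<open>auto simp: Pbar_def\<close>)
  next
    fix x y assume "x \<in> Pbar S" "y \<in> Pbar S" "le_bar le x y"
    then show "le_bar leQ (map_option g x) (map_option g y)"
      by (elim Pbar_cases) (use gi in auto)
  next
    fix u x assume "u \<in> Pbar Q" "x \<in> Pbar S"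
    then show "le_bar le (map_option f u) x = le_bar leQ u (map_option g x)"
      by (elim Pbar_cases) (use gi in auto)
  next
    fix x assume "x \<in> Pbar S"
    then show "map_option f (map_option g x) = x"
      by (elim Pbar_cases) (use gi in auto)
  qed
qed

lemma is_module_Pbar:
  assumes "is_module S le V F"
  shows "is_module (Pbar S) (le_bar le) (V_bar V) (F_bar F)"
proof -
  note M = assms[unfolded is_module_def]
  have "is_subspace (V_bar V x) \<and> fin_dim (V_bar V x)" if "x \<in> Pbar S" for x
    using that by (elim Pbar_cases) (use M is_subspace_zero fin_dim_zero in auto)
  moreover have "is_linear_on (V_bar V x) (V_bar V y) (F_bar F x y)"
    if "x \<in> Pbar S" "y \<in> Pbar S" "le_bar le x y" for x y
    using that by (elim Pbar_cases) (use M in \<open>auto simp: is_linear_on_def vscale_def\<close>)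
  moreover have "F_bar F x x v = v" if "x \<in> Pbar S" "v \<in> V_bar V x" for x v
    using that by (elim Pbar_cases) (use M in auto)
  moreover have "F_bar F y z (F_bar F x y v) = F_bar F x z v"
    if "x \<in> Pbar S" "y \<in> Pbar S" "z \<in> Pbar S" "le_bar le x y \<and> le_bar le y z" "v \<in> V_bar V x"
    for x y z v
    using that by (elim Pbar_cases) (use M in auto)
  ultimately show ?thesis unfolding is_module_def by blast
qed

lemma module_iso_Pbar:
  fixes VB :: "'a \<Rightarrow> ('k::field) vec set"
  assumes "module_iso S le VA FA VB FB"
  shows "module_iso (Pbar S) (le_bar le) (V_bar VA) (F_bar FA) (V_bar VB) (F_bar FB)"
proof -
  obtain \<phi> where \<phi>_iso: "\<forall>x\<in>S. is_linear_on (VA x) (VB x) (\<phi> x) \<and> bij_betw (\<phi> x) (VA x) (VB x)"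
    and \<phi>_nat: "\<forall>x\<in>S. \<forall>y\<in>S. le x y \<longrightarrow> (\<forall>v\<in>VA x. \<phi> y (FA x y v) = FB x y (\<phi> x v))"
    using assms unfolding module_iso_def by blast
  define \<psi> where "\<psi> x = (case x of None \<Rightarrow> (\<lambda>v. 0) | Some a \<Rightarrow> \<phi> a)" for x
  have "is_linear_on (V_bar VA x) (V_bar VB x) (\<psi> x) \<and> bij_betw (\<psi> x) (V_bar VA x) (V_bar VB x)"
    if "x \<in> Pbar S" for x
    using that by (elim Pbar_cases)
      (use \<phi>_iso in \<open>auto simp: \<psi>_def bij_betw_def is_linear_on_def vscale_def fun_eq_iff\<close>)
  moreover have "\<psi> y (F_bar FA x y v) = F_bar FB x y (\<psi> x v)"
    if "x \<in> Pbar S" "y \<in> Pbar S" "le_bar le x y" "v \<in> V_bar VA x" for x y v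
    using that by (elim Pbar_cases) (use \<phi>_nat in \<open>auto simp: \<psi>_def\<close>)
  ultimately show ?thesis unfolding module_iso_def by blast
qed

lemma is_poset_Int:
  assumes "is_poset T le"
  shows "is_poset (Int_carrier T le) (Int_le le)"
proof -
  have refl: "\<forall>x\<in>T. le x x" and antisym: "\<forall>x\<in>T. \<forall>y\<in>T. le x y \<and> le y x \<longrightarrow> x = y"
    and trans: "\<forall>x\<in>T. \<forall>y\<in>T. \<forall>z\<in>T. le x y \<and> le y z \<longrightarrow> le x z"
    using assms unfolding is_poset_def by blast+
  show ?thesis unfolding is_poset_def Int_carrier_def Int_le_def
  proof (intro conjI ballI impI; clarsimp)
    show "x1 = x2 \<and> y1 = y2"
      if "x1 \<in> T" "y1 \<in> T" "x2 \<in> T" "y2 \<in> T" "le x1 x2" "le y1 y2" "le x2 x1" "le y2 y1"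
      for x1 y1 x2 y2
      using antisym that by blast
  qed (use refl trans in blast)+
qed

lemma galois_insertion_Int:
  assumes "galois_insertion T leT S leS f g"
  shows "galois_insertion (Int_carrier T leT) (Int_le leT) (Int_carrier S leS) (Int_le leS)
     (map_prod f f) (map_prod g g)"
  using assms unfolding galois_insertion_def is_monotone_def Int_carrier_def Int_le_def
  by auto

lemma finite_Int_carrier_Pbar: "finite Q \<Longrightarrow> finite (Int_carrier (Pbar Q) le)"
  by (rule finite_subset[of _ "Pbar Q \<times> Pbar Q"]) (auto simp: Int_carrier_def Pbar_def)

definition ker_V :: "('b \<Rightarrow> ('k::field) vec set) \<Rightarrow> ('b \<Rightarrow> 'b \<Rightarrow> 'k vec \<Rightarrow> 'k vec)
    \<Rightarrow> 'b \<times> 'b \<Rightarrow> 'k vec set" where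
  "ker_V V F p = {v \<in> V (fst p). F (fst p) (snd p) v = 0}"

definition ker_F :: "('b \<Rightarrow> 'b \<Rightarrow> ('k::field) vec \<Rightarrow> 'k vec) \<Rightarrow> 'b \<times> 'b \<Rightarrow> 'b \<times> 'b \<Rightarrow> 'k vec \<Rightarrow> 'k vec" where
  "ker_F F p q = F (fst p) (fst q)"

lemma is_subspace_kernel:
  fixes V :: "('k::field) vec set"
  assumes "is_subspace V" "is_linear_on V W \<phi>"
  shows "is_subspace {v \<in> V. \<phi> v = 0}"
proof -
  have "vscale c 0 = (0::'k vec)" for c by (simp add: vscale_def fun_eq_iff)
  then show ?thesis
    using assms is_linear_on_zero[OF assms(2)] unfolding is_subspace_def is_linear_on_def by auto
qed

lemma is_module_ker:
  assumes "is_module T le V F"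
  shows "is_module (Int_carrier T le) (Int_le le) (ker_V V F) (ker_F F)"
proof -
  have sub: "\<forall>x\<in>T. is_subspace (V x) \<and> fin_dim (V x)"
    and lin: "\<forall>x\<in>T. \<forall>y\<in>T. le x y \<longrightarrow> is_linear_on (V x) (V y) (F x y)"
    and idm: "\<forall>x\<in>T. \<forall>v\<in>V x. F x x v = v"
    and comp: "\<forall>x\<in>T. \<forall>y\<in>T. \<forall>z\<in>T. le x y \<and> le y z \<longrightarrow> (\<forall>v\<in>V x. F y z (F x y v) = F x z v)"
    using assms unfolding is_module_def by blast+
  have "is_subspace (ker_V V F (x, y)) \<and> fin_dim (ker_V V F (x, y))"
    if "x \<in> T" "y \<in> T" "le x y" for x y
  proof
    show "is_subspace (ker_V V F (x, y))"
      unfolding ker_V_def fst_conv snd_conv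
      by (rule is_subspace_kernel[where W = "V y"]) (use sub lin that in auto)
    then show "fin_dim (ker_V V F (x, y))"
      by (rule fin_dim_subspace) (use sub that in \<open>auto simp: ker_V_def\<close>)
  qed
  moreover have "is_linear_on (ker_V V F (x1, y1)) (ker_V V F (x2, y2)) (F x1 x2)"
    if "x1 \<in> T" "y1 \<in> T" "le x1 y1" "x2 \<in> T" "y2 \<in> T" "le x2 y2" "le x1 x2" "le y1 y2"
    for x1 y1 x2 y2
  proof -
    have "F x2 y2 (F x1 x2 v) = 0" if "v \<in> V x1" "F x1 y1 v = 0" for v
    proof -
      have "F x2 y2 (F x1 x2 v) = F y1 y2 (F x1 y1 v)"
        using comp \<open>x1 \<in> T\<close> \<open>x2 \<in> T\<close> \<open>y1 \<in> T\<close> \<open>y2 \<in> T\<close> \<open>le x1 x2\<close> \<open>le x2 y2\<close>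
          \<open>le x1 y1\<close> \<open>le y1 y2\<close> \<open>v \<in> V x1\<close> by metis
      also have "\<dots> = 0"
        using \<open>F x1 y1 v = 0\<close> is_linear_on_zero[of "V y1" "V y2" "F y1 y2"] lin sub
          \<open>y1 \<in> T\<close> \<open>y2 \<in> T\<close> \<open>le y1 y2\<close>
        unfolding is_subspace_def by auto
      finally show ?thesis .
    qed
    with lin that show ?thesis unfolding is_linear_on_def ker_V_def by auto
  qed
  ultimately show ?thesis
    using idm comp unfolding is_module_def Int_carrier_def Int_le_def ker_F_def
    by (auto simp: ker_V_def)
qed

lemma bij_betw_kernels:
  assumes "bij_betw \<phi> V1 V2" "inj_on \<psi> W1" "0 \<in> W1" "\<psi> 0 = 0"
    and "\<forall>v\<in>V1. G1 v \<in> W1" "\<forall>v\<in>V1. \<psi> (G1 v) = G2 (\<phi> v)"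
  shows "bij_betw \<phi> {v \<in> V1. G1 v = 0} {w \<in> V2. G2 w = 0}"
proof -
  have "w \<in> \<phi> ` {v \<in> V1. G1 v = 0}" if "w \<in> V2" "G2 w = 0" for w
  proof -
    obtain v where v: "v \<in> V1" "w = \<phi> v" using assms(1) \<open>w \<in> V2\<close> unfolding bij_betw_def by auto
    then have "\<psi> (G1 v) = \<psi> 0" using assms(4,6) \<open>G2 w = 0\<close> by simp
    then have "G1 v = 0" using assms(2,3,5) v(1) unfolding inj_on_def by blast
    with v show ?thesis by blast
  qed
  with assms show ?thesis unfolding bij_betw_def inj_on_def by auto
qed

lemma module_iso_ker:
  assumes "is_module T le V1 F1" "module_iso T le V1 F1 V2 F2"
  shows "module_iso (Int_carrier T le) (Int_le le) (ker_V V1 F1) (ker_F F1) (ker_V V2 F2) (ker_F F2)"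
proof -
  obtain \<phi> where \<phi>_iso: "\<forall>x\<in>T. is_linear_on (V1 x) (V2 x) (\<phi> x) \<and> bij_betw (\<phi> x) (V1 x) (V2 x)"
    and \<phi>_nat: "\<forall>x\<in>T. \<forall>y\<in>T. le x y \<longrightarrow> (\<forall>v\<in>V1 x. \<phi> y (F1 x y v) = F2 x y (\<phi> x v))"
    using assms(2) unfolding module_iso_def by blast
  have sub: "\<forall>x\<in>T. is_subspace (V1 x)"
    and lin: "\<forall>x\<in>T. \<forall>y\<in>T. le x y \<longrightarrow> is_linear_on (V1 x) (V1 y) (F1 x y)"
    using assms(1) unfolding is_module_def by blast+
  have bij: "bij_betw (\<phi> x) (ker_V V1 F1 (x, y)) (ker_V V2 F2 (x, y))"
    if "x \<in> T" "y \<in> T" "le x y" for x y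
    unfolding ker_V_def fst_conv snd_conv
  proof (rule bij_betw_kernels)
    have "0 \<in> V1 y" using sub \<open>y \<in> T\<close> unfolding is_subspace_def by blast
    then show "0 \<in> V1 y" "\<phi> y 0 = 0"
      using is_linear_on_zero[of "V1 y" "V2 y" "\<phi> y"] \<phi>_iso \<open>y \<in> T\<close> by auto
    show "inj_on (\<phi> y) (V1 y)" using \<phi>_iso \<open>y \<in> T\<close> bij_betw_def by blast
  qed (use \<phi>_iso \<phi>_nat lin that in \<open>auto simp: is_linear_on_def\<close>)
  have "is_linear_on (ker_V V1 F1 (x, y)) (ker_V V2 F2 (x, y)) (\<phi> x)"
    if "x \<in> T" "y \<in> T" "le x y" for x y
    using \<phi>_iso bij_betw_imp_surj_on[OF bij[OF that]] that
    unfolding is_linear_on_def by (auto simp: ker_V_def)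
  with bij \<phi>_nat show ?thesis
    unfolding module_iso_def
    by (intro exI[of _ "\<lambda>p. \<phi> (fst p)"])
      (auto simp: Int_carrier_def Int_le_def ker_V_def ker_F_def)
qed

lemma K_V_eq_ker_V: "K_V V F = ker_V (V_bar V) (F_bar F)"
  by (simp add: fun_eq_iff K_V_def ker_V_def)

lemma K_F_eq_ker_F: "K_F F = ker_F (F_bar F)"
  by (simp add: fun_eq_iff K_F_def ker_F_def)

lemma is_module_K:
  assumes "is_module S le V F"
  shows "is_module (Int_carrier (Pbar S) (le_bar le)) (Int_le (le_bar le)) (K_V V F) (K_F F)"
  unfolding K_V_eq_ker_V K_F_eq_ker_F by (rule is_module_ker[OF is_module_Pbar[OF assms]])

lemma module_iso_K:
  assumes "is_module S le VA FA" "module_iso S le VA FA VB FB"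
  shows "module_iso (Int_carrier (Pbar S) (le_bar le)) (Int_le (le_bar le))
    (K_V VA FA) (K_F FA) (K_V VB FB) (K_F FB)"
  unfolding K_V_eq_ker_V K_F_eq_ker_F
  by (rule module_iso_ker[OF is_module_Pbar[OF assms(1)] module_iso_Pbar[OF assms(2)]])

lemma K_V_pullback:
  "K_V V F (map_prod (map_option g) (map_option g) p) = K_V (\<lambda>a. V (g a)) (\<lambda>a b. F (g a) (g b)) p"
  by (cases p; rename_tac x y; case_tac x; case_tac y) (auto simp: K_V_def)

lemma K_F_pullback:
  "K_F F (map_prod (map_option g) (map_option g) p) (map_prod (map_option g) (map_option g) q)
    = K_F (\<lambda>a b. F (g a) (g b)) p q"
  by (cases p; cases q; rename_tac x y x' y'; case_tac x; case_tac x') (auto simp: K_F_def)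

definition is_coupling_over :: "'b set \<Rightarrow> ('b \<Rightarrow> 'b \<Rightarrow> bool)
    \<Rightarrow> ('b \<Rightarrow> ('k::field) vec set) \<Rightarrow> ('b \<Rightarrow> 'b \<Rightarrow> 'k vec \<Rightarrow> 'k vec)
    \<Rightarrow> ('b \<Rightarrow> 'k vec set) \<Rightarrow> ('b \<Rightarrow> 'b \<Rightarrow> 'k vec \<Rightarrow> 'k vec)
    \<Rightarrow> 'c set \<Rightarrow> ('c \<Rightarrow> 'c \<Rightarrow> bool) \<Rightarrow> ('c \<Rightarrow> 'b) \<Rightarrow> ('b \<Rightarrow> 'c) \<Rightarrow> ('c \<Rightarrow> 'b) \<Rightarrow> ('b \<Rightarrow> 'c)
    \<Rightarrow> ('c \<Rightarrow> 'k vec set) \<Rightarrow> ('c \<Rightarrow> 'c \<Rightarrow> 'k vec \<Rightarrow> 'k vec) \<Rightarrow> bool" where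
  "is_coupling_over S le VA FA VB FB Q leQ f g h i VG FG \<longleftrightarrow>
     finite Q \<and> is_poset Q leQ
     \<and> galois_insertion Q leQ S le f g \<and> galois_insertion Q leQ S le h i
     \<and> is_module Q leQ VG FG
     \<and> module_iso S le (\<lambda>x. VG (g x)) (\<lambda>x y. FG (g x) (g y)) VA FA
     \<and> module_iso S le (\<lambda>x. VG (i x)) (\<lambda>x y. FG (i x) (i y)) VB FB"

lemma is_coupling_iff_over: "is_coupling = is_coupling_over"
  by (simp add: fun_eq_iff is_coupling_def is_coupling_over_def)

(* d_GT only ranges over couplings carried by subsets of nat;
   countable carriers are re-encoded by to_nat. *)
lemma d_GT_le_coupling_cost:
  fixes Q :: "'c::countable set"
  assumes "is_coupling_over S le VA FA VB FB Q leQ f g h i VG FG"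
  shows "d_GT S le \<delta> VA FA VB FB \<le> (SUP q\<in>Q. \<delta> (f q) (h q))"
proof -
  let ?le = "\<lambda>a b. leQ (from_nat a) (from_nat b)"
  have "is_poset (to_nat ` Q) ?le = is_poset Q leQ"
    by (simp add: is_poset_def)
  moreover have "galois_insertion (to_nat ` Q) ?le S le (\<lambda>a. f' (from_nat a)) (\<lambda>x. to_nat (g' x))
      = galois_insertion Q leQ S le f' g'" for f' g'
    by (simp add: galois_insertion_def is_monotone_def inj_image_mem_iff)
  moreover have "is_module (to_nat ` Q) ?le (\<lambda>a. VG (from_nat a)) (\<lambda>a b. FG (from_nat a) (from_nat b))
      = is_module Q leQ VG FG"
    by (simp add: is_module_def)
  ultimately have coupling: "is_coupling S le VA FA VB FB (to_nat ` Q) ?le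
      (\<lambda>a. f (from_nat a)) (\<lambda>x. to_nat (g x)) (\<lambda>a. h (from_nat a)) (\<lambda>x. to_nat (i x))
      (\<lambda>a. VG (from_nat a)) (\<lambda>a b. FG (from_nat a) (from_nat b))"
    using assms unfolding is_coupling_def is_coupling_over_def by simp
  have "d_GT S le \<delta> VA FA VB FB \<le> (SUP a\<in>to_nat ` Q. \<delta> (f (from_nat a)) (h (from_nat a)))"
    unfolding d_GT_def
    by (rule Inf_lower, unfold mem_Collect_eq, (rule exI)+, rule conjI[OF _ coupling], rule refl)
  also have "\<dots> = (SUP q\<in>Q. \<delta> (f q) (h q))"
    by (simp add: image_image)
  finally show ?thesis .
qed

lemma is_coupling_over_K:
  assumes "is_coupling_over P le VM FM VN FN Q leQ f g h i VG FG"
  shows "is_coupling_over (Int_carrier (Pbar P) (le_bar le)) (Int_le (le_bar le))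
     (K_V VM FM) (K_F FM) (K_V VN FN) (K_F FN)
     (Int_carrier (Pbar Q) (le_bar leQ)) (Int_le (le_bar leQ))
     (map_prod (map_option f) (map_option f)) (map_prod (map_option g) (map_option g))
     (map_prod (map_option h) (map_option h)) (map_prod (map_option i) (map_option i))
     (K_V VG FG) (K_F FG)"
proof -
  have Q: "finite Q" "is_poset Q leQ" and \<Gamma>: "is_module Q leQ VG FG"
    and gi: "galois_insertion Q leQ P le f g" "galois_insertion Q leQ P le h i"
    and iso: "module_iso P le (\<lambda>x. VG (g x)) (\<lambda>x y. FG (g x) (g y)) VM FM"
      "module_iso P le (\<lambda>x. VG (i x)) (\<lambda>x y. FG (i x) (i y)) VN FN"
    using assms unfolding is_coupling_over_def by blast+
  have "is_monotone P le Q leQ g" "is_monotone P le Q leQ i"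
    using gi unfolding galois_insertion_def by blast+
  from this[THEN is_module_pullback[OF \<Gamma>]] iso
  have "module_iso (Int_carrier (Pbar P) (le_bar le)) (Int_le (le_bar le))
      (\<lambda>x. K_V VG FG (map_prod (map_option g) (map_option g) x))
      (\<lambda>x y. K_F FG (map_prod (map_option g) (map_option g) x) (map_prod (map_option g) (map_option g) y))
      (K_V VM FM) (K_F FM)"
    "module_iso (Int_carrier (Pbar P) (le_bar le)) (Int_le (le_bar le))
      (\<lambda>x. K_V VG FG (map_prod (map_option i) (map_option i) x))
      (\<lambda>x y. K_F FG (map_prod (map_option i) (map_option i) x) (map_prod (map_option i) (map_option i) y))
      (K_V VN FN) (K_F FN)"
    unfolding K_V_pullback K_F_pullback by (simp_all add: module_iso_K)
  with Q \<Gamma> gi show ?thesis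
    unfolding is_coupling_over_def
    by (simp add: finite_Int_carrier_Pbar is_poset_Int is_poset_Pbar galois_insertion_Int
        galois_insertion_Pbar is_module_K)
qed

lemma cost_K_coupling_le:
  fixes d :: "'a \<Rightarrow> 'a \<Rightarrow> real"
  shows "(SUP p\<in>Int_carrier (Pbar Q) le.
      Int_dist (d_bar d) (map_prod (map_option f) (map_option f) p) (map_prod (map_option h) (map_option h) p))
    \<le> (SUP q\<in>Q. ennreal (d (f q) (h q)))"
proof (rule SUP_least)
  \<comment> \<open>map_option f and map_option h both fix the top None, where d_bar vanishes.\<close>
  have "d_bar d (map_option f x) (map_option h x) \<le> (SUP q\<in>Q. ennreal (d (f q) (h q)))"
    if "x \<in> Pbar Q" for x
    using that by (elim Pbar_cases) (auto intro!: SUP_upper)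
  then show "Int_dist (d_bar d) (map_prod (map_option f) (map_option f) p)
      (map_prod (map_option h) (map_option h) p) \<le> (SUP q\<in>Q. ennreal (d (f q) (h q)))"
    if "p \<in> Int_carrier (Pbar Q) le" for p
    using that by (cases p) (simp add: Int_dist_def Int_carrier_def)
qed

theorem proposition6p12:
  fixes P :: "'a set" and le :: "'a \<Rightarrow> 'a \<Rightarrow> bool" and d :: "'a \<Rightarrow> 'a \<Rightarrow> real"
    and VM VN :: "'a \<Rightarrow> ('k::field) vec set"
    and FM FN :: "'a \<Rightarrow> 'a \<Rightarrow> 'k vec \<Rightarrow> 'k vec"
  assumes "finite P" and "is_poset P le" and "is_metric P d"
    and "is_module P le VM FM" and "is_module P le VN FN"
  shows "d_GT (Int_carrier (Pbar P) (le_bar le)) (Int_le (le_bar le)) (Int_dist (d_bar d))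
            (K_V VM FM) (K_F FM) (K_V VN FN) (K_F FN)
         \<le> d_GT P le (\<lambda>x y. ennreal (d x y)) VM FM VN FN"
proof -
  have "d_GT (Int_carrier (Pbar P) (le_bar le)) (Int_le (le_bar le)) (Int_dist (d_bar d))
            (K_V VM FM) (K_F FM) (K_V VN FN) (K_F FN) \<le> (SUP q\<in>Q. ennreal (d (f q) (h q)))"
    if "is_coupling P le VM FM VN FN Q leQ f g h i VG FG" for Q leQ f g h i VG FG
    using d_GT_le_coupling_cost[OF is_coupling_over_K[OF that[unfolded is_coupling_iff_over]]]
      cost_K_coupling_le order_trans by blast
  then show ?thesis
    unfolding d_GT_def[of P le] by (blast intro: Inf_greatest)
qed

end
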